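(* Let $\mathcal{J}$ be a Jordan algebra of finite dimension $n$ over a field $\mathcal{F}$ of characteristic different from $2$, let $\Lambda=(\lambda_{i,j})_{i,j=1,\dots,n}$ be an $n\times n$ matrix all of whose entries are non-zero elements of $\mathcal{F}$, and let $\mathcal{V}$ be a basis of $\mathcal{J}$. Let $\Delta:\mathcal{J}\to\mathcal{J}$ be a map such that for every $x,y\in\mathcal{J}$ there is a derivation $D_{x,y}$ of $\mathcal{J}$ which is $\Lambda$-symmetric with respect to $\mathcal{V}$ and satisfies $\Delta(x)=D_{x,y}(x)$ and $\Delta(y)=D_{x,y}(y)$. Then $\Delta$ is a derivation.
   Context: A derivation of $\mathcal{J}$ is a linear map $D$ with $D(xy)=D(x)y+xD(y)$ for all $x,y$. For a linear map $\psi$ on $\mathcal{J}$ and the ordered basis $\mathcal{V}=(v_1,\dots,v_n)$, the matrix of $\psi$ is $(x_{i,j})$ with $\psi(v_j)=\sum_i x_{i,j}v_i$; $\psi$ is $\Lambda$-symmetric with respect to $\mathcal{V}$ if this matrix equals $(\lambda_{i,j}a_{i,j})_{i,j}$ for some symmetric matrix $(a_{i,j})$. *)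

theory Defs
  imports Complex_Main
begin

definition bilinear_prod :: "('a::field \<Rightarrow> 'v::ab_group_add \<Rightarrow> 'v) \<Rightarrow> ('v \<Rightarrow> 'v \<Rightarrow> 'v) \<Rightarrow> bool" where
  "bilinear_prod scale mult \<longleftrightarrow>
     (\<forall>x y z. mult (x + y) z = mult x z + mult y z) \<and>
     (\<forall>x y z. mult x (y + z) = mult x y + mult x z) \<and>
     (\<forall>c x y. mult (scale c x) y = scale c (mult x y)) \<and>
     (\<forall>c x y. mult x (scale c y) = scale c (mult x y))"

definition jordan_algebra :: "('a::field \<Rightarrow> 'v::ab_group_add \<Rightarrow> 'v) \<Rightarrow> ('v \<Rightarrow> 'v \<Rightarrow> 'v) \<Rightarrow> bool" where
  "jordan_algebra scale mult \<longleftrightarrow>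
     vector_space scale \<and> bilinear_prod scale mult \<and>
     (\<forall>x y. mult x y = mult y x) \<and>
     (\<forall>x y. mult (mult x y) (mult x x) = mult x (mult y (mult x x)))"

definition derivation :: "('a::field \<Rightarrow> 'v::ab_group_add \<Rightarrow> 'v) \<Rightarrow> ('v \<Rightarrow> 'v \<Rightarrow> 'v) \<Rightarrow> ('v \<Rightarrow> 'v) \<Rightarrow> bool" where
  "derivation scale mult D \<longleftrightarrow>
     Vector_Spaces.linear scale scale D \<and>
     (\<forall>x y. D (mult x y) = mult (D x) y + mult x (D y))"

definition is_ordered_basis :: "('a::field \<Rightarrow> 'v::ab_group_add \<Rightarrow> 'v) \<Rightarrow> nat \<Rightarrow> (nat \<Rightarrow> 'v) \<Rightarrow> bool" where
  "is_ordered_basis scale n v \<longleftrightarrow>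
     inj_on v {..<n} \<and>
     \<not> module.dependent scale (v ` {..<n}) \<and>
     module.span scale (v ` {..<n}) = UNIV"

definition lambda_symmetric :: "('a::field \<Rightarrow> 'v::ab_group_add \<Rightarrow> 'v) \<Rightarrow> nat \<Rightarrow> (nat \<Rightarrow> 'v)
     \<Rightarrow> (nat \<Rightarrow> nat \<Rightarrow> 'a) \<Rightarrow> ('v \<Rightarrow> 'v) \<Rightarrow> bool" where
  "lambda_symmetric scale n v \<Lambda> \<psi> \<longleftrightarrow>
     (\<exists>a :: nat \<Rightarrow> nat \<Rightarrow> 'a.
        (\<forall>i<n. \<forall>j<n. a i j = a j i) \<and>
        (\<forall>j<n. \<psi> (v j) = (\<Sum>i<n. scale (\<Lambda> i j * a i j) (v i))))"

end

theory Submission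
  imports Defs
begin

text \<open>Write \<open>d\<^sub>i\<^sub>j\<close> for the matrix of a \<open>\<Lambda>\<close>-symmetric map \<open>D\<close>. Symmetry of the
  underlying matrix gives \<open>d\<^sub>k\<^sub>j = (\<lambda>\<^sub>k\<^sub>j / \<lambda>\<^sub>j\<^sub>k) d\<^sub>j\<^sub>k\<close>, so the \<open>k\<close>-th row of \<open>D\<close> is
  determined by its \<open>k\<close>-th column \<open>D(v\<^sub>k)\<close>. Since \<open>\<Delta>\<close> agrees with one such
  derivation at both \<open>x\<close> and \<open>v\<^sub>k\<close>, the \<open>k\<close>-th coordinate of \<open>\<Delta>(x)\<close> is
  \<open>\<Sum>\<^sub>j x\<^sub>j (\<lambda>\<^sub>k\<^sub>j / \<lambda>\<^sub>j\<^sub>k) \<Delta>(v\<^sub>k)\<^sub>j\<close>, with coefficients independent of \<open>x\<close>; hence \<open>\<Delta>\<close> is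
  linear. Taking \<open>x = y\<close> gives \<open>\<Delta>(x x) = \<Delta>(x) x + x \<Delta>(x)\<close>, and polarising this
  identity yields the Leibniz rule.\<close>

definition basis_coord ::
    "('a::field \<Rightarrow> 'v::ab_group_add \<Rightarrow> 'v) \<Rightarrow> nat \<Rightarrow> (nat \<Rightarrow> 'v) \<Rightarrow> 'v \<Rightarrow> nat \<Rightarrow> 'a"
  where "basis_coord scale n v w i = module.representation scale (v ` {..<n}) w (v i)"

context vector_space
begin

context
  fixes n :: nat and v :: "nat \<Rightarrow> 'b"
  assumes basis: "is_ordered_basis scale n v"
begin

private lemma independent_basis: "independent (v ` {..<n})"
  and in_span_basis: "w \<in> span (v ` {..<n})"
  using basis unfolding is_ordered_basis_def by auto

lemma basis_coord_add:
  "basis_coord scale n v (x + y) i = basis_coord scale n v x i + basis_coord scale n v y i"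
  by (simp add: basis_coord_def representation_add independent_basis in_span_basis)

lemma basis_coord_scale: "basis_coord scale n v (c *s x) i = c * basis_coord scale n v x i"
  by (simp add: basis_coord_def representation_scale independent_basis in_span_basis)

lemma basis_coord_sum:
  "basis_coord scale n v (sum f A) i = (\<Sum>a\<in>A. basis_coord scale n v (f a) i)"
  by (simp add: basis_coord_def representation_sum independent_basis in_span_basis)

lemma basis_coord_basis:
  assumes "i < n" "j < n"
  shows "basis_coord scale n v (v j) i = (if i = j then 1 else 0)"
proof -
  have "inj_on v {..<n}" using basis unfolding is_ordered_basis_def by simp
  then show ?thesis
    using assms
    by (auto simp: basis_coord_def representation_basis independent_basis inj_on_eq_iff)
qed

lemma basis_coord_lincomb:
  assumes "i < n"
  shows "basis_coord scale n v (\<Sum>j<n. c j *s v j) i = c i"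
  using assms
  by (simp add: basis_coord_sum basis_coord_scale basis_coord_basis if_distrib[of "(*) _"]
      cong: if_cong)

lemma sum_basis_coord: "(\<Sum>i<n. basis_coord scale n v w i *s v i) = w"
proof -
  have "inj_on v {..<n}" using basis unfolding is_ordered_basis_def by simp
  then have "(\<Sum>i<n. basis_coord scale n v w i *s v i) =
      (\<Sum>b\<in>v ` {..<n}. representation (v ` {..<n}) w b *s b)"
    by (simp add: basis_coord_def sum.reindex)
  also have "\<dots> = w"
    by (rule sum_representation_eq) (auto simp: independent_basis in_span_basis)
  finally show ?thesis .
qed

lemma basis_coord_ext:
  assumes "\<And>i. i < n \<Longrightarrow> basis_coord scale n v x i = basis_coord scale n v y i"
  shows "x = y"
proof -
  have "x = (\<Sum>i<n. basis_coord scale n v x i *s v i)" by (rule sum_basis_coord[symmetric])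
  also have "\<dots> = (\<Sum>i<n. basis_coord scale n v y i *s v i)" using assms by simp
  also have "\<dots> = y" by (rule sum_basis_coord)
  finally show ?thesis .
qed

lemma linear_basis_coord:
  assumes "Vector_Spaces.linear scale scale D"
  shows "basis_coord scale n v (D x) i =
    (\<Sum>j<n. basis_coord scale n v x j * basis_coord scale n v (D (v j)) i)"
proof -
  interpret D: Vector_Spaces.linear scale scale D by fact
  have "D x = (\<Sum>j<n. basis_coord scale n v x j *s D (v j))"
    by (subst sum_basis_coord[symmetric, of x]) (simp add: D.sum D.scale)
  then show ?thesis by (simp add: basis_coord_sum basis_coord_scale)
qed

lemma lambda_symmetric_basis_coord_swap:
  assumes "lambda_symmetric scale n v \<Lambda> D" "\<Lambda> j i \<noteq> 0" "i < n" "j < n"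
  shows "basis_coord scale n v (D (v j)) i =
    \<Lambda> i j / \<Lambda> j i * basis_coord scale n v (D (v i)) j"
proof -
  obtain a where a_sym: "\<forall>i<n. \<forall>j<n. a i j = a j i"
    and D_basis: "\<forall>j<n. D (v j) = (\<Sum>i<n. (\<Lambda> i j * a i j) *s v i)"
    using assms(1) unfolding lambda_symmetric_def by blast
  have "basis_coord scale n v (D (v j)) i = \<Lambda> i j * a i j"
    and "basis_coord scale n v (D (v i)) j = \<Lambda> j i * a j i"
    using assms(3,4) D_basis by (simp_all add: basis_coord_lincomb)
  moreover have "a j i = a i j" using a_sym assms(3,4) by blast
  ultimately show ?thesis using assms(2) by simp
qed

lemma lambda_symmetric_basis_coord:
  assumes "Vector_Spaces.linear scale scale D" "lambda_symmetric scale n v \<Lambda> D"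
    and "\<forall>i<n. \<forall>j<n. \<Lambda> i j \<noteq> 0" "k < n"
  shows "basis_coord scale n v (D x) k =
    (\<Sum>j<n. basis_coord scale n v x j * (\<Lambda> k j / \<Lambda> j k * basis_coord scale n v (D (v k)) j))"
    (is "_ = ?rhs")
proof -
  have "basis_coord scale n v (D x) k =
      (\<Sum>j<n. basis_coord scale n v x j * basis_coord scale n v (D (v j)) k)"
    by (rule linear_basis_coord[OF assms(1)])
  also have "\<dots> = ?rhs"
  proof (rule sum.cong[OF refl])
    fix j assume "j \<in> {..<n}"
    then show "basis_coord scale n v x j * basis_coord scale n v (D (v j)) k =
        basis_coord scale n v x j * (\<Lambda> k j / \<Lambda> j k * basis_coord scale n v (D (v k)) j)"
      using lambda_symmetric_basis_coord_swap[of \<Lambda> D k j] assms(2-4) by simp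
  qed
  finally show ?thesis .
qed

lemma linear_if_locally_lambda_symmetric:
  assumes "\<forall>i<n. \<forall>j<n. \<Lambda> i j \<noteq> 0"
    and agrees: "\<And>x k. k < n \<Longrightarrow> \<exists>D. Vector_Spaces.linear scale scale D \<and>
                  lambda_symmetric scale n v \<Lambda> D \<and> \<Delta> x = D x \<and> \<Delta> (v k) = D (v k)"
  shows "Vector_Spaces.linear scale scale \<Delta>"
proof -
  define M where "M k j = \<Lambda> k j / \<Lambda> j k * basis_coord scale n v (\<Delta> (v k)) j" for k j
  have coord_\<Delta>: "basis_coord scale n v (\<Delta> x) k = (\<Sum>j<n. basis_coord scale n v x j * M k j)"
    if k: "k < n" for x k
  proof -
    obtain D where "Vector_Spaces.linear scale scale D" "lambda_symmetric scale n v \<Lambda> D"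
      and "\<Delta> x = D x" "\<Delta> (v k) = D (v k)"
      using agrees[OF k] by blast
    then show ?thesis
      using lambda_symmetric_basis_coord assms(1) k by (simp add: M_def)
  qed
  have "\<Delta> (x + y) = \<Delta> x + \<Delta> y" for x y
    by (rule basis_coord_ext)
       (simp add: coord_\<Delta> basis_coord_add distrib_right sum.distrib)
  moreover have "\<Delta> (c *s x) = c *s \<Delta> x" for c x
    by (rule basis_coord_ext)
       (simp add: coord_\<Delta> basis_coord_scale sum_distrib_left mult.assoc)
  ultimately show ?thesis
    unfolding Vector_Spaces.linear_iff by (simp add: vector_space_axioms)
qed

end

end

lemma derivation_if_leibniz_squares:
  fixes scale :: "'a::field \<Rightarrow> 'v::ab_group_add \<Rightarrow> 'v"
  assumes "vector_space scale" "bilinear_prod scale mult" "(2::'a) \<noteq> 0"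
    and comm: "\<And>x y. mult x y = mult y x"
    and lin: "Vector_Spaces.linear scale scale \<Delta>"
    and squares: "\<And>x. \<Delta> (mult x x) = mult (\<Delta> x) x + mult x (\<Delta> x)"
  shows "derivation scale mult \<Delta>"
proof -
  interpret vector_space scale by fact
  interpret \<Delta>: Vector_Spaces.linear scale scale \<Delta> by fact
  have add_left: "\<And>x y z. mult (x + y) z = mult x z + mult y z"
    and add_right: "\<And>x y z. mult x (y + z) = mult x y + mult x z"
    using assms(2) unfolding bilinear_prod_def by auto
  have halve: "p = q" if "p + p = q + q" for p q :: 'v
  proof -
    have "scale 2 p = scale 2 q"
      using that by (simp add: scale_left_distrib[of 1 1, simplified one_add_one])
    then show ?thesis using assms(3) by (metis scale_left_imp_eq)
  qed
  have "\<Delta> (mult x y) = mult (\<Delta> x) y + mult x (\<Delta> y)" for x y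
  proof (rule halve)
    have "\<Delta> (mult x x) + \<Delta> (mult x y) + \<Delta> (mult y x) + \<Delta> (mult y y) =
       mult (\<Delta> x) x + mult (\<Delta> x) y + mult (\<Delta> y) x + mult (\<Delta> y) y +
       (mult x (\<Delta> x) + mult x (\<Delta> y) + mult y (\<Delta> x) + mult y (\<Delta> y))"
      using squares[of "x + y"] by (simp add: \<Delta>.add add_left add_right ac_simps)
    then show "\<Delta> (mult x y) + \<Delta> (mult x y) =
      (mult (\<Delta> x) y + mult x (\<Delta> y)) + (mult (\<Delta> x) y + mult x (\<Delta> y))"
      using squares[of x] squares[of y] comm[of y x] comm[of y "\<Delta> x"] comm[of "\<Delta> y" x]
      by (simp add: algebra_simps)
  qed
  with lin show ?thesis unfolding derivation_def by simp
qed

theorem theorem3p1: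
  fixes scale :: "'a::field \<Rightarrow> 'v::ab_group_add \<Rightarrow> 'v"
    and mult :: "'v \<Rightarrow> 'v \<Rightarrow> 'v"
    and n :: nat
    and v :: "nat \<Rightarrow> 'v"
    and \<Lambda> :: "nat \<Rightarrow> nat \<Rightarrow> 'a"
    and \<Delta> :: "'v \<Rightarrow> 'v"
  assumes "jordan_algebra scale mult"
    and "(2::'a) \<noteq> 0"
    and "is_ordered_basis scale n v"
    and "\<forall>i<n. \<forall>j<n. \<Lambda> i j \<noteq> 0"
    and "\<forall>x y. \<exists>D. derivation scale mult D \<and> lambda_symmetric scale n v \<Lambda> D \<and>
                   \<Delta> x = D x \<and> \<Delta> y = D y"
  shows "derivation scale mult \<Delta>"
proof -
  have vs: "vector_space scale" and bilinear: "bilinear_prod scale mult"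
    and comm: "\<And>x y. mult x y = mult y x"
    using assms(1) unfolding jordan_algebra_def by auto
  have "Vector_Spaces.linear scale scale \<Delta>"
    by (rule vector_space.linear_if_locally_lambda_symmetric[OF vs assms(3,4)])
       (use assms(5) in \<open>unfold derivation_def, blast\<close>)
  moreover have "\<Delta> (mult x x) = mult (\<Delta> x) x + mult x (\<Delta> x)" for x
    using assms(5) unfolding derivation_def by metis
  ultimately show ?thesis
    using derivation_if_leibniz_squares[OF vs bilinear assms(2) comm] by blast
qed

end
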